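(* Let $X$ be a topological space with a regular $G_\delta$-diagonal and let $E$ be a $B_1$-retract of $X$. Then $E$ is a $G_\delta$-set in $X$.
   Context: A function $f:X\to Y$ between topological spaces is a Baire-one function if it is the pointwise limit of a sequence of continuous functions $f_n:X\to Y$. A subset $E$ of $X$ (with the subspace topology) is a $B_1$-retract of $X$ if there exists a Baire-one function $r:X\to E$ with $r(x)=x$ for all $x\in E$. A subset $A$ of a topological space $Z$ is a regular $G_\delta$-set if there is a sequence $(G_n)_{n\ge1}$ of open sets in $Z$ with $A=\bigcap_n G_n=\bigcap_n \overline{G_n}$. $X$ has a regular $G_\delta$-diagonal if $\Delta=\{(x,x):x\in X\}$ is a regular $G_\delta$-set in $X\times X$. *)

theory Defs
  imports "HOL-Analysis.Analysis"
begin

definition baire_one :: "'a topology \<Rightarrow> 'b topology \<Rightarrow> ('a \<Rightarrow> 'b) \<Rightarrow> bool" where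
  "baire_one X Y f \<longleftrightarrow>
     (\<exists>fs :: nat \<Rightarrow> 'a \<Rightarrow> 'b. (\<forall>n. continuous_map X Y (fs n)) \<and>
        (\<forall>x\<in>topspace X. limitin Y (\<lambda>n. fs n x) (f x) sequentially))"

definition b1_retract :: "'a topology \<Rightarrow> 'a set \<Rightarrow> bool" where
  "b1_retract X E \<longleftrightarrow> E \<subseteq> topspace X \<and>
     (\<exists>r. baire_one X (subtopology X E) r \<and> (\<forall>x\<in>E. r x = x))"

definition regular_gdelta_in :: "'a topology \<Rightarrow> 'a set \<Rightarrow> bool" where
  "regular_gdelta_in Z A \<longleftrightarrow>
     (\<exists>G :: nat \<Rightarrow> 'a set. (\<forall>n. openin Z (G n)) \<and>
        A = (\<Inter>n. G n) \<and> A = (\<Inter>n. Z closure_of (G n)))"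

definition regular_gdelta_diagonal :: "'a topology \<Rightarrow> bool" where
  "regular_gdelta_diagonal X \<longleftrightarrow>
     regular_gdelta_in (prod_topology X X) {(x, x) | x. x \<in> topspace X}"

end

theory Submission
  imports Defs
begin

(* The heart of the argument is a general fact: the preimage of a regular
   G_delta set A = \<Inter>m G m = \<Inter>m closure(G m) under a Baire-one map g = lim h_n
   is a G_delta set, namely  \<Inter>m \<Inter>k \<Union>{n\<ge>k} h_n\<^sup>-\<^sup>1(G m).  If g x \<in> A \<subseteq> G m then
   h_n x eventually lies in G m; conversely, if h_n x \<in> G m frequently for
   every m, then the limit g x lies in every closure(G m), hence in A.

   For a B1-retraction r : X \<rightarrow> E, the set E is exactly the fixed-point set of r,
   i.e. the preimage of the diagonal under the Baire-one map x \<mapsto> (x, r x)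
   into X \<times> X; so the theorem follows when the diagonal is a regular G_delta. *)

lemma limitin_frequently_in_closure_of:
  assumes lim: "limitin Z s l sequentially"
    and freq: "frequently (\<lambda>n. s n \<in> S) sequentially"
  shows "l \<in> Z closure_of S"
  unfolding in_closure_of
proof (intro conjI allI impI)
  show "l \<in> topspace Z"
    using lim by (rule limitin_topspace)
next
  fix T assume "l \<in> T \<and> openin Z T"
  then have "eventually (\<lambda>n. s n \<in> T) sequentially"
    using lim unfolding limitin_def by blast
  with freq have "frequently (\<lambda>n. s n \<in> S \<and> s n \<in> T) sequentially"
    by (rule frequently_eventually_frequently)
  then show "\<exists>y. y \<in> S \<and> y \<in> T"
    by (auto dest: frequently_ex)
qed

lemma gdelta_in_baire_one_preimage:
  assumes A: "regular_gdelta_in Z A" and g: "baire_one X Z g"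
  shows "gdelta_in X {x \<in> topspace X. g x \<in> A}"
proof -
  obtain G :: "nat \<Rightarrow> _" where G: "(\<forall>m. openin Z (G m)) \<and> A = (\<Inter>m. G m) \<and> A = (\<Inter>m. Z closure_of G m)"
    using A unfolding regular_gdelta_in_def by (elim exE) (erule that)
  have G_open: "\<And>m. openin Z (G m)"
    using G by blast
  have A_Inter: "A = (\<Inter>m. G m)"
    using G by (rule conjunct1[OF conjunct2])
  have A_closure: "A = (\<Inter>m. Z closure_of G m)"
    using G by (rule conjunct2[OF conjunct2])
  obtain h where h_cont: "\<And>n. continuous_map X Z (h n)"
    and h_lim: "\<And>x. x \<in> topspace X \<Longrightarrow> limitin Z (\<lambda>n. h n x) (g x) sequentially"
    using g unfolding baire_one_def by blast
  define U where "U = (\<lambda>(m, k). \<Union>n\<in>{k..}. {x \<in> topspace X. h n x \<in> G m})"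
  have U_open: "openin X (U p)" for p
    using openin_continuous_map_preimage[OF h_cont G_open]
    by (auto simp: U_def split: prod.split intro!: openin_Union)
  have "{x \<in> topspace X. g x \<in> A} = \<Inter> (range U)"
  proof (intro equalityI subsetI)
    fix x assume "x \<in> {x \<in> topspace X. g x \<in> A}"
    then have x: "x \<in> topspace X" and gx: "g x \<in> A" by auto
    show "x \<in> \<Inter> (range U)"
    proof (rule InterI)
      fix S assume "S \<in> range U"
      then obtain m k where S: "S = U (m, k)"
        by auto
      have "g x \<in> G m"
        using gx A_Inter by blast
      then have "eventually (\<lambda>n. h n x \<in> G m) sequentially"
        using h_lim[OF x] G_open[of m] unfolding limitin_def by blast
      then obtain N where "\<And>n. n \<ge> N \<Longrightarrow> h n x \<in> G m"
        unfolding eventually_sequentially by blast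
      then have "h (max N k) x \<in> G m"
        by simp
      then show "x \<in> S"
        unfolding S U_def using x by (auto intro!: bexI[of _ "max N k"])
    qed
  next
    fix x assume xU: "x \<in> \<Inter> (range U)"
    then have x: "x \<in> topspace X"
      by (auto simp: U_def)
    have "frequently (\<lambda>n. h n x \<in> G m) sequentially" for m
      using xU by (auto simp: U_def frequently_sequentially)
    then have "g x \<in> Z closure_of G m" for m
      using h_lim[OF x] by (blast intro: limitin_frequently_in_closure_of)
    then have "g x \<in> A"
      unfolding A_closure by blast
    with x show "x \<in> {x \<in> topspace X. g x \<in> A}"
      by blast
  qed
  moreover have "gdelta_in X (\<Inter> (range U))"
    by (rule gdelta_in_Inter) (auto intro: open_imp_gdelta_in U_open)
  ultimately show ?thesis
    by simp
qed

lemma baire_one_graph_map: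
  assumes "baire_one X Y g"
  shows "baire_one X (prod_topology X Y) (\<lambda>x. (x, g x))"
proof -
  obtain h where h_cont: "\<And>n. continuous_map X Y (h n)"
    and h_lim: "\<And>x. x \<in> topspace X \<Longrightarrow> limitin Y (\<lambda>n. h n x) (g x) sequentially"
    using assms unfolding baire_one_def by blast
  have "continuous_map X (prod_topology X Y) (\<lambda>x. (x, h n x))" for n
    by (intro continuous_map_pairedI continuous_map_id[unfolded id_def] h_cont)
  moreover have "limitin (prod_topology X Y) (\<lambda>n. (x, h n x)) (x, g x) sequentially"
    if "x \<in> topspace X" for x
    using h_lim[OF that] that by (simp add: limitin_pairwise o_def)
  ultimately show ?thesis
    unfolding baire_one_def by (intro exI[of _ "\<lambda>n x. (x, h n x)"]) blast
qed

lemma b1_retract_fixed_points: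
  assumes "b1_retract X E"
  obtains r where "baire_one X X r" and "E = {x \<in> topspace X. r x = x}"
proof -
  obtain r h where E_sub: "E \<subseteq> topspace X" and r_id: "\<And>x. x \<in> E \<Longrightarrow> r x = x"
    and h_cont: "\<And>n. continuous_map X (subtopology X E) (h n)"
    and h_lim: "\<And>x. x \<in> topspace X \<Longrightarrow> limitin (subtopology X E) (\<lambda>n. h n x) (r x) sequentially"
    using assms unfolding b1_retract_def baire_one_def by blast
  have r_into: "r x \<in> E" and lim_X: "limitin X (\<lambda>n. h n x) (r x) sequentially"
    if "x \<in> topspace X" for x
    using h_lim[OF that] by (simp_all add: limitin_subtopology)
  have "baire_one X X r"
    unfolding baire_one_def
    using continuous_map_into_fulltopology[OF h_cont] lim_X by blast
  moreover have "E = {x \<in> topspace X. r x = x}"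
  proof (intro equalityI subsetI)
    fix x assume "x \<in> E"
    then show "x \<in> {x \<in> topspace X. r x = x}"
      using E_sub r_id by blast
  next
    fix x assume "x \<in> {x \<in> topspace X. r x = x}"
    then show "x \<in> E"
      using r_into by (metis (mono_tags, lifting) mem_Collect_eq)
  qed
  ultimately show thesis
    by (rule that)
qed

theorem proposition2p2:
  fixes X :: "'a topology" and E :: "'a set"
  assumes "regular_gdelta_diagonal X"
    and "b1_retract X E"
  shows "gdelta_in X E"
proof -
  obtain r where r: "baire_one X X r" and E_fix: "E = {x \<in> topspace X. r x = x}"
    using assms(2) by (rule b1_retract_fixed_points)
  have "gdelta_in X {x \<in> topspace X. (x, r x) \<in> {(y, y) | y. y \<in> topspace X}}"
    using assms(1) baire_one_graph_map[OF r] unfolding regular_gdelta_diagonal_def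
    by (rule gdelta_in_baire_one_preimage)
  moreover have "{x \<in> topspace X. (x, r x) \<in> {(y, y) | y. y \<in> topspace X}} = E"
    using E_fix by auto
  ultimately show ?thesis
    by simp
qed

end
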